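(* Let $X$ be a real-valued random variable, let $Z\sim\mathcal{N}(0,1)$ be independent of $X$, set $Y=X+Z$, and let $a\in\mathbb{R}$. Then $\mathsf{m}(X\mid Y=y)=ay$ for all $y\in\mathbb{R}$ if and only if, for almost every $y\in\mathbb{R}$, $$\mathbb{E}\big[\mathsf{sign}(X-ay)\,\phi(y-X)\big]=0,$$ where $\phi$ is the standard Gaussian density.
   Context: The conditional median is $\mathsf{m}(X\mid Y=y)=F^{-1}_{X\mid Y=y}(1/2)$, where $F_{X\mid Y=y}$ is the conditional cdf of $X$ given $Y=y$ and $F^{-1}(p)=\inf\{x\in\mathbb{R}: p\le F(x)\}$. *)

theory Defs
  imports "HOL-Probability.Probability"
begin

text \<open>Conditional cdf of X given Y = y, where Y = X + Z with Z ~ N(0,1) independent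
  of X.  This is the canonical (Bayes-formula) version, defined for every y:
  F(x | y) = E[1{X <= x} phi(y - X)] / E[phi(y - X)].\<close>
definition gauss_cond_cdf :: "'a measure \<Rightarrow> ('a \<Rightarrow> real) \<Rightarrow> real \<Rightarrow> real \<Rightarrow> real" where
  "gauss_cond_cdf M X y x =
     (\<integral>\<omega>. indicator {..x} (X \<omega>) * std_normal_density (y - X \<omega>) \<partial>M) /
     (\<integral>\<omega>. std_normal_density (y - X \<omega>) \<partial>M)"

definition gen_inverse :: "(real \<Rightarrow> real) \<Rightarrow> real \<Rightarrow> real" where
  "gen_inverse F p = Inf {x. p \<le> F x}"

definition gauss_cond_median :: "'a measure \<Rightarrow> ('a \<Rightarrow> real) \<Rightarrow> real \<Rightarrow> real" where
  "gauss_cond_median M X y = gen_inverse (gauss_cond_cdf M X y) (1/2)"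

end

theory Submission
  imports Defs
begin

text \<open>Let \<open>\<mu>\<^sub>y\<close> be the finite measure \<open>S \<mapsto> E[1\<^sub>S(X) \<phi>(y - X)]\<close>, the conditional law of
  \<open>X\<close> given \<open>Y = y\<close> up to normalisation. The sign integral is \<open>\<mu>\<^sub>y(ay,\<infinity>) - \<mu>\<^sub>y(-\<infinity>,ay)\<close>,
  and \<open>m(X | Y = y) = ay\<close> says that \<open>ay\<close> is a median of \<open>\<mu>\<^sub>y\<close>, so the two tails differ by at
  most the atom \<open>\<mu>\<^sub>y{ay}\<close>. For \<open>a \<noteq> 0\<close> this atom vanishes except for countably many \<open>y\<close>.
  Everything else rests on exponential tilting: \<open>\<mu>\<^bsub>y+t\<^esub>\<close> has density proportional to \<open>e\<^bsup>tx\<^esup>\<close>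
  with respect to \<open>\<mu>\<^sub>y\<close>, so the two tails of \<open>\<mu>\<^sub>y\<close> at a fixed point balance for at most one
  \<open>y\<close>, and a median stuck at \<open>0\<close> for every \<open>y\<close> forces \<open>X = 0\<close> almost surely (case \<open>a = 0\<close>).
  Conversely, balanced tails for almost every \<open>y\<close> pass by continuity in \<open>y\<close> to one-sided
  inequalities for every \<open>y\<close>, and tilting makes the inequality below \<open>ay\<close> strict.\<close>

lemma std_normal_density_le_1: "std_normal_density x \<le> 1"
proof -
  have "1 / sqrt (2 * pi) \<le> 1"
    using pi_ge_two by (simp add: divide_le_eq real_le_rsqrt)
  moreover have "exp (- x\<^sup>2 / 2) \<le> 1"
    by simp
  ultimately show ?thesis
    unfolding std_normal_density_def by (intro mult_le_one) auto
qed

lemma isCont_std_normal_density: "isCont std_normal_density x"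
  unfolding std_normal_density_def[abs_def] by (intro continuous_intros) auto

lemma std_normal_density_minus: "std_normal_density (- x) = std_normal_density x"
  by (simp add: std_normal_density_def)

lemma std_normal_density_shift:
  "exp (t * y + t\<^sup>2 / 2) * std_normal_density (y + t - x) = std_normal_density (y - x) * exp (t * x)"
proof -
  have "t * y + t\<^sup>2 / 2 + - (y + t - x)\<^sup>2 / 2 = - (y - x)\<^sup>2 / 2 + t * x"
    by (simp add: power2_eq_square field_simps)
  then show ?thesis
    unfolding std_normal_density_def by (simp add: exp_add[symmetric])
qed

lemma gen_inverse_eqI:
  fixes F :: "real \<Rightarrow> real"
  assumes "\<And>x. c < x \<Longrightarrow> p \<le> F x" and "\<And>x. x < c \<Longrightarrow> F x < p"
  shows "gen_inverse F p = c"
  unfolding gen_inverse_def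
proof (rule cInf_eq_non_empty)
  show "{x. p \<le> F x} \<noteq> {}"
    using assms(1)[of "c + 1"] by auto
  show "c \<le> x" if "x \<in> {x. p \<le> F x}" for x
  proof (rule ccontr)
    assume "\<not> c \<le> x"
    then have "F x < p"
      by (intro assms(2)) simp
    with that show False
      by simp
  qed
  show "y \<le> c" if lower: "\<And>x. x \<in> {x. p \<le> F x} \<Longrightarrow> y \<le> x" for y
  proof (rule dense_ge)
    show "y \<le> z" if "c < z" for z
      using lower assms(1)[OF that] by blast
  qed
qed

context finite_borel_measure
begin

lemma gen_inverse_cdf:
  assumes "0 < p" "p < measure M (space M)"
  defines "q \<equiv> gen_inverse (cdf M) p"
  shows "p \<le> cdf M q" and "measure M {..<q} \<le> p"
proof -
  define T where "T = {x. p \<le> cdf M x}"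
  have q: "q = Inf T"
    unfolding q_def gen_inverse_def T_def ..
  have "eventually (\<lambda>x. p < cdf M x) at_top"
    using cdf_lim_at_top assms(2) by (rule order_tendstoD)
  then obtain t where "t \<in> T"
    unfolding T_def by (metis (mono_tags) eventually_at_top_linorder less_imp_le mem_Collect_eq order_refl)
  have "eventually (\<lambda>x. cdf M x < p) at_bot"
    using cdf_lim_at_bot assms(1) by (rule order_tendstoD)
  then obtain b where b: "\<And>x. x \<le> b \<Longrightarrow> cdf M x < p"
    by (auto simp: eventually_at_bot_linorder)
  have "bdd_below T"
  proof (rule bdd_belowI)
    show "b \<le> x" if "x \<in> T" for x
      using that b[of x] by (cases "x \<le> b") (auto simp: T_def)
  qed
  have below: "cdf M x < p" if "x < q" for x
    using that cInf_lower[OF _ \<open>bdd_below T\<close>, of x] unfolding q T_def by force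
  have "eventually (\<lambda>x. cdf M x \<le> p) (at_left q)"
    by (rule eventually_mono[OF eventually_at_left_real[of "q - 1" q]]) (auto intro: less_imp_le below)
  then show "measure M {..<q} \<le> p"
    by (rule tendsto_upperbound[OF cdf_at_left]) simp
  have above: "p \<le> cdf M x" if "q < x" for x
  proof -
    have "Inf T < x" "T \<noteq> {}"
      using that \<open>t \<in> T\<close> unfolding q by auto
    then obtain s where "s \<in> T" "s < x"
      by (meson cInf_lessD)
    then show ?thesis
      using cdf_nondecreasing[of s x] unfolding T_def by simp
  qed
  have "eventually (\<lambda>x. p \<le> cdf M x) (at_right q)"
    by (rule eventually_mono[OF eventually_at_right_real[of q "q + 1"]]) (auto intro: above)
  then show "p \<le> cdf M q"
    by (rule tendsto_lowerbound[OF cdf_is_right_cont[unfolded continuous_within]]) simp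
qed

end

lemma AE_lborel_ex_in_open:
  assumes "AE x in lborel. P x" "open U" "U \<noteq> {}"
  shows "\<exists>x\<in>U. P x"
proof (rule ccontr)
  assume "\<not> (\<exists>x\<in>U. P x)"
  then have "U \<subseteq> {x. \<not> P x}"
    by auto
  moreover obtain N where "N \<in> null_sets lborel" "{x. \<not> P x} \<subseteq> N"
    using assms(1) by (auto simp: eventually_ae_filter)
  moreover have "U \<in> sets lebesgue"
    using \<open>open U\<close> by (simp add: borel_open)
  ultimately have "U \<in> null_sets lebesgue"
    by (meson null_sets_completionI null_sets_subset order_trans)
  then show False
    using open_not_negligible[OF assms(2,3)] by (simp add: negligible_iff_null_sets)
qed

lemma continuous_le_if_AE_lborel_le:
  fixes f g :: "real \<Rightarrow> real"
  assumes "continuous_on UNIV f" "continuous_on UNIV g" "open U"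
    and "AE x in lborel. x \<in> U \<longrightarrow> f x \<le> g x" and "x \<in> U"
  shows "f x \<le> g x"
proof (rule ccontr)
  assume "\<not> f x \<le> g x"
  then have "U \<inter> {x. g x < f x} \<noteq> {}"
    using \<open>x \<in> U\<close> by auto
  moreover have "open (U \<inter> {x. g x < f x})"
    using assms(1-3) by (intro open_Int open_Collect_less)
  ultimately show False
    using AE_lborel_ex_in_open[OF assms(4)] by force
qed

locale gauss_channel = prob_space M for M :: "'a measure" +
  fixes X :: "'a \<Rightarrow> real"
  assumes X_measurable [measurable]: "X \<in> borel_measurable M"
begin

text \<open>\<open>posterior y\<close> is the joint law of \<open>(X, Y)\<close> disintegrated at \<open>Y = y\<close>: the conditional
  law of \<open>X\<close> given \<open>Y = y\<close> times the density of \<open>Y\<close> at \<open>y\<close>.\<close>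

definition posterior :: "real \<Rightarrow> real measure" where
  "posterior y = distr (density M (\<lambda>\<omega>. std_normal_density (y - X \<omega>))) borel X"

abbreviation mass :: "real \<Rightarrow> real set \<Rightarrow> real" where
  "mass y S \<equiv> measure (posterior y) S"

lemma sets_posterior [simp, measurable_cong]: "sets (posterior y) = sets borel"
  by (simp add: posterior_def)

lemma space_posterior [simp]: "space (posterior y) = UNIV"
  by (simp add: posterior_def)

lemma mass_eq_integral:
  assumes [measurable]: "S \<in> sets borel"
  shows "mass y S = (\<integral>\<omega>. indicator S (X \<omega>) * std_normal_density (y - X \<omega>) \<partial>M)"
proof -
  let ?g = "\<lambda>\<omega>. std_normal_density (y - X \<omega>)"
  have "mass y S = (\<integral>x. indicator S x \<partial>posterior y)"
    by simp
  also have "\<dots> = (\<integral>\<omega>. indicator S (X \<omega>) \<partial>density M ?g)"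
    unfolding posterior_def by (rule integral_distr) measurable
  also have "\<dots> = (\<integral>\<omega>. ?g \<omega> *\<^sub>R indicator S (X \<omega>) \<partial>M)"
    by (rule integral_density) auto
  finally show ?thesis
    by (simp add: mult.commute)
qed

lemma integrable_posterior_integrand:
  assumes [measurable]: "S \<in> sets borel"
  shows "integrable M (\<lambda>\<omega>. indicator S (X \<omega>) * std_normal_density (y - X \<omega>))"
  by (rule integrable_const_bound[where B=1])
     (auto simp: indicator_def std_normal_density_le_1)

lemma finite_borel_measure_posterior: "finite_borel_measure (posterior y)"
proof -
  have "emeasure (posterior y) UNIV = (\<integral>\<^sup>+\<omega>. std_normal_density (y - X \<omega>) \<partial>M)"
    unfolding posterior_def by (simp add: emeasure_distr emeasure_density)
  also have "\<dots> \<le> (\<integral>\<^sup>+\<omega>. 1 \<partial>M)"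
    by (intro nn_integral_mono) (simp add: std_normal_density_le_1)
  finally have "emeasure (posterior y) (space (posterior y)) \<noteq> \<infinity>"
    by (auto simp: emeasure_space_1 top_unique)
  then show ?thesis
    by (intro finite_borel_measure.intro finite_measureI) (simp_all add: finite_borel_measure_axioms_def)
qed

lemma null_sets_posterior_iff:
  "N \<in> null_sets (posterior y) \<longleftrightarrow> N \<in> sets borel \<and> (AE \<omega> in M. X \<omega> \<notin> N)"
proof -
  have "N \<in> null_sets (posterior y) \<longleftrightarrow>
      N \<in> sets borel \<and> (AE \<omega> in M. \<omega> \<in> X -` N \<inter> space M \<longrightarrow> std_normal_density (y - X \<omega>) = 0)"
    unfolding posterior_def
    by (auto simp: null_sets_distr_iff null_sets_density_iff)
  also have "\<dots> \<longleftrightarrow> N \<in> sets borel \<and> (AE \<omega> in M. X \<omega> \<notin> N)"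
    by (intro conj_cong refl AE_cong) (auto simp: normal_density_pos less_imp_neq[symmetric])
  finally show ?thesis .
qed

lemma mass_eq_0_iff:
  assumes "S \<in> sets borel"
  shows "mass y S = 0 \<longleftrightarrow> (AE \<omega> in M. X \<omega> \<notin> S)"
proof -
  interpret P: finite_borel_measure "posterior y"
    by (rule finite_borel_measure_posterior)
  have "mass y S = 0 \<longleftrightarrow> S \<in> null_sets (posterior y)"
    using assms by (simp add: null_sets_def P.emeasure_eq_measure ennreal_eq_0_iff measure_le_0_iff)
  then show ?thesis
    using assms by (simp add: null_sets_posterior_iff)
qed

lemma mass_UNIV_pos: "0 < mass y UNIV"
  using mass_eq_0_iff[of UNIV y] AE_False measure_nonneg[of "posterior y" UNIV]
  by (simp add: less_le)

lemma mass_Un: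
  assumes "A \<in> sets borel" "B \<in> sets borel" "A \<inter> B = {}"
  shows "mass y (A \<union> B) = mass y A + mass y B"
proof -
  interpret P: finite_borel_measure "posterior y"
    by (rule finite_borel_measure_posterior)
  show ?thesis
    using assms by (intro P.finite_measure_Union) auto
qed

lemma mass_atMost_greaterThan: "mass y {..x} + mass y {x<..} = mass y UNIV"
proof -
  have "{..x} \<union> {x<..} = UNIV"
    by auto
  then show ?thesis
    using mass_Un[of "{..x}" "{x<..}" y] by (simp add: disjoint_iff)
qed

lemma mass_lessThan_atLeast: "mass y {..<x} + mass y {x..} = mass y UNIV"
proof -
  have "{..<x} \<union> {x..} = UNIV"
    by auto
  then show ?thesis
    using mass_Un[of "{..<x}" "{x..}" y] by (simp add: disjoint_iff)
qed

lemma mass_mono: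
  assumes "A \<subseteq> B" "B \<in> sets borel"
  shows "mass y A \<le> mass y B"
proof -
  interpret P: finite_borel_measure "posterior y"
    by (rule finite_borel_measure_posterior)
  show ?thesis
    using assms by (intro P.finite_measure_mono) auto
qed

lemma continuous_on_mass:
  assumes [measurable]: "S \<in> sets borel"
  shows "continuous_on UNIV (\<lambda>y. mass y S)"
proof (intro continuous_at_imp_continuous_on ballI continuous_at_sequentiallyI)
  fix y and u :: "nat \<Rightarrow> real"
  assume "u \<longlonglongrightarrow> y"
  show "(\<lambda>n. mass (u n) S) \<longlonglongrightarrow> mass y S"
    unfolding mass_eq_integral[OF assms]
  proof (rule integral_dominated_convergence[where w="\<lambda>_. 1"])
    show "AE \<omega> in M. (\<lambda>n. indicator S (X \<omega>) * std_normal_density (u n - X \<omega>))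
        \<longlonglongrightarrow> indicator S (X \<omega>) * std_normal_density (y - X \<omega>)"
      using \<open>u \<longlonglongrightarrow> y\<close>
      by (intro AE_I2 tendsto_mult_left isCont_tendsto_compose[OF isCont_std_normal_density]
          tendsto_diff tendsto_const)
    show "AE \<omega> in M. norm (indicator S (X \<omega>) * std_normal_density (u n - X \<omega>)) \<le> 1" for n
      by (auto simp: indicator_def std_normal_density_le_1)
  qed simp_all
qed

lemma mass_shift_eq_integral:
  assumes [measurable]: "S \<in> sets borel"
  shows "integrable M (\<lambda>\<omega>. indicator S (X \<omega>) * std_normal_density (y - X \<omega>) * exp (t * X \<omega>))"
    and "exp (t * y + t\<^sup>2 / 2) * mass (y + t) S =
      (\<integral>\<omega>. indicator S (X \<omega>) * std_normal_density (y - X \<omega>) * exp (t * X \<omega>) \<partial>M)"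
proof -
  have tilt: "(\<lambda>\<omega>. indicator S (X \<omega>) * std_normal_density (y - X \<omega>) * exp (t * X \<omega>)) =
      (\<lambda>\<omega>. exp (t * y + t\<^sup>2 / 2) * (indicator S (X \<omega>) * std_normal_density (y + t - X \<omega>)))"
    by (simp add: fun_eq_iff std_normal_density_shift mult.left_commute flip: mult.assoc)
  show "integrable M (\<lambda>\<omega>. indicator S (X \<omega>) * std_normal_density (y - X \<omega>) * exp (t * X \<omega>))"
    unfolding tilt by (intro integrable_mult_right integrable_posterior_integrand assms)
  show "exp (t * y + t\<^sup>2 / 2) * mass (y + t) S =
      (\<integral>\<omega>. indicator S (X \<omega>) * std_normal_density (y - X \<omega>) * exp (t * X \<omega>) \<partial>M)"
    unfolding tilt mass_eq_integral[OF assms] by simp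
qed

lemma mass_shift_le:
  assumes [measurable]: "S \<in> sets borel" and "S \<subseteq> {..c}" "0 \<le> t"
  shows "exp (t * y + t\<^sup>2 / 2) * mass (y + t) S \<le> exp (t * c) * mass y S"
proof -
  have "exp (t * y + t\<^sup>2 / 2) * mass (y + t) S =
      (\<integral>\<omega>. indicator S (X \<omega>) * std_normal_density (y - X \<omega>) * exp (t * X \<omega>) \<partial>M)"
    by (rule mass_shift_eq_integral(2)[OF assms(1)])
  also have "\<dots> \<le> (\<integral>\<omega>. exp (t * c) * (indicator S (X \<omega>) * std_normal_density (y - X \<omega>)) \<partial>M)"
  proof (rule integral_mono)
    show "indicator S (X \<omega>) * std_normal_density (y - X \<omega>) * exp (t * X \<omega>)
        \<le> exp (t * c) * (indicator S (X \<omega>) * std_normal_density (y - X \<omega>))" for \<omega>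
    proof (cases "X \<omega> \<in> S")
      case True
      then have "exp (t * X \<omega>) \<le> exp (t * c)"
        using assms(2,3) by (auto intro: mult_left_mono)
      then have "std_normal_density (y - X \<omega>) * exp (t * X \<omega>) \<le> std_normal_density (y - X \<omega>) * exp (t * c)"
        by (rule mult_left_mono) simp
      then show ?thesis
        using True by (simp add: mult_ac)
    qed simp
  qed (simp_all add: mass_shift_eq_integral(1) integrable_posterior_integrand)
  also have "\<dots> = exp (t * c) * mass y S"
    by (simp add: mass_eq_integral)
  finally show ?thesis .
qed

lemma mass_shift_gt:
  assumes [measurable]: "S \<in> sets borel" and "S \<subseteq> {c<..}" "0 < t" "0 < mass y S"
  shows "exp (t * c) * mass y S < exp (t * y + t\<^sup>2 / 2) * mass (y + t) S"
proof -
  have exp_less: "exp (t * c) < exp (t * X \<omega>)" if "X \<omega> \<in> S" for \<omega>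
    using that assms(2,3) by auto
  have "exp (t * c) * mass y S =
      (\<integral>\<omega>. exp (t * c) * (indicator S (X \<omega>) * std_normal_density (y - X \<omega>)) \<partial>M)"
    by (simp add: mass_eq_integral)
  also have "\<dots> < (\<integral>\<omega>. indicator S (X \<omega>) * std_normal_density (y - X \<omega>) * exp (t * X \<omega>) \<partial>M)"
  proof (rule integral_less_AE[where A="X -` S \<inter> space M"])
    have "\<not> (AE \<omega> in M. X \<omega> \<notin> S)"
      using assms(4) mass_eq_0_iff[OF assms(1)] by auto
    then show "emeasure M (X -` S \<inter> space M) \<noteq> 0"
      using AE_iff_measurable[of "X -` S \<inter> space M" M "\<lambda>\<omega>. X \<omega> \<notin> S"] by auto
    show "AE \<omega> in M. \<omega> \<in> X -` S \<inter> space M \<longrightarrow>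
        exp (t * c) * (indicator S (X \<omega>) * std_normal_density (y - X \<omega>)) \<noteq>
        indicator S (X \<omega>) * std_normal_density (y - X \<omega>) * exp (t * X \<omega>)"
      using exp_less normal_density_pos[of 1 0 "y - X _"] by (intro AE_I2) (auto simp: less_imp_neq)
    show "AE \<omega> in M. exp (t * c) * (indicator S (X \<omega>) * std_normal_density (y - X \<omega>)) \<le>
        indicator S (X \<omega>) * std_normal_density (y - X \<omega>) * exp (t * X \<omega>)"
    proof (intro AE_I2)
      fix \<omega>
      have "exp (t * c) * std_normal_density (y - X \<omega>) \<le> exp (t * X \<omega>) * std_normal_density (y - X \<omega>)"
        if "X \<omega> \<in> S"
        using exp_less[OF that] by (intro mult_right_mono) auto
      then show "exp (t * c) * (indicator S (X \<omega>) * std_normal_density (y - X \<omega>)) \<le>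
          indicator S (X \<omega>) * std_normal_density (y - X \<omega>) * exp (t * X \<omega>)"
        by (simp add: indicator_def mult_ac)
    qed
  qed (simp_all add: mass_shift_eq_integral(1) integrable_posterior_integrand)
  also have "\<dots> = exp (t * y + t\<^sup>2 / 2) * mass (y + t) S"
    by (rule mass_shift_eq_integral(2)[OF assms(1), symmetric])
  finally show ?thesis .
qed

lemma mass_lower_less_upper:
  assumes "A \<in> sets borel" "B \<in> sets borel" "A \<subseteq> {..c}" "B \<subseteq> {c<..}" "y < y'"
    and "mass y A = mass y B" "0 < mass y B"
  shows "mass y' A < mass y' B"
proof -
  define t where "t = y' - y"
  have t: "0 < t" "y' = y + t"
    using \<open>y < y'\<close> by (auto simp: t_def)
  have "exp (t * y + t\<^sup>2 / 2) * mass y' A \<le> exp (t * c) * mass y A"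
    unfolding \<open>y' = y + t\<close> using assms t by (intro mass_shift_le) auto
  also have "\<dots> = exp (t * c) * mass y B"
    using assms by simp
  also have "\<dots> < exp (t * y + t\<^sup>2 / 2) * mass y' B"
    unfolding \<open>y' = y + t\<close> using assms t by (intro mass_shift_gt) auto
  finally show ?thesis
    by simp
qed

lemma mass_balanced_unique:
  assumes "mass y {..x} = mass y {x<..}" and "mass y' {..x} = mass y' {x<..}"
  shows "y = y'"
proof (rule ccontr)
  have pos: "0 < mass z {x<..}" if "mass z {..x} = mass z {x<..}" for z
    using that mass_atMost_greaterThan[of z x] mass_UNIV_pos[of z] by linarith
  have less: False if "mass z {..x} = mass z {x<..}" "mass z' {..x} = mass z' {x<..}" "z < z'" for z z'
    using mass_lower_less_upper[of "{..x}" "{x<..}" x z z'] that pos[OF that(1)] by simp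
  assume "y \<noteq> y'"
  then show False
    using less[OF assms] less[OF assms(2,1)] by linarith
qed

text \<open>Tilting by \<open>t\<close> multiplies the mass beyond \<open>e > c\<close> by at least \<open>e\<^bsup>te\<^esup>\<close> but the mass
  below \<open>c\<close> by at most \<open>e\<^bsup>tc\<^esup>\<close>, so the upper tail cannot stay dominated for large \<open>t\<close>.\<close>

lemma AE_le_if_mass_upper_le:
  assumes le: "\<And>y. mass y {c<..} \<le> mass y {..c}"
  shows "AE \<omega> in M. X \<omega> \<le> c"
proof (rule ccontr)
  interpret P: finite_borel_measure "posterior 0"
    by (rule finite_borel_measure_posterior)
  define G where "G = mass 0 UNIV"
  have upper: "mass 0 {e<..} = G - cdf (posterior 0) e" for e
    using mass_atMost_greaterThan[of 0 e] by (simp add: G_def cdf_def2)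
  assume "\<not> (AE \<omega> in M. X \<omega> \<le> c)"
  then have "mass 0 {c<..} \<noteq> 0"
    using mass_eq_0_iff[of "{c<..}" 0] by (simp add: not_less)
  then have "0 < mass 0 {c<..}"
    using measure_nonneg[of "posterior 0" "{c<..}"] by linarith
  moreover have "((\<lambda>e. mass 0 {e<..}) \<longlongrightarrow> mass 0 {c<..}) (at_right c)"
    unfolding upper using P.cdf_is_right_cont[of c]
    by (intro tendsto_diff tendsto_const) (simp add: continuous_within)
  ultimately have "eventually (\<lambda>e. 0 < mass 0 {e<..}) (at_right c)"
    by (rule order_tendstoD(1)[rotated])
  then have "eventually (\<lambda>e. c < e \<and> 0 < mass 0 {e<..}) (at_right c)"
    by (intro eventually_conj eventually_at_right_less)
  then obtain e where e: "c < e" "0 < mass 0 {e<..}"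
    using eventually_happens'[OF trivial_limit_at_right_real] by blast
  define d where "d = mass 0 {e<..}"
  define t where "t = G / ((e - c) * d)"
  have "0 < d" "0 < G"
    using e mass_UNIV_pos by (auto simp: d_def G_def)
  then have "0 < t" and td: "t * (e - c) * d = G"
    using e by (auto simp: t_def)
  let ?K = "exp (t\<^sup>2 / 2)"
  have "exp (t * e) * d < ?K * mass t {e<..}"
    using mass_shift_gt[of "{e<..}" e t 0] \<open>0 < t\<close> e by (simp add: d_def)
  also have "\<dots> \<le> ?K * mass t {c<..}"
    using e by (intro mult_left_mono mass_mono) auto
  also have "\<dots> \<le> ?K * mass t {..c}"
    using le by (intro mult_left_mono) auto
  also have "\<dots> \<le> exp (t * c) * mass 0 {..c}"
    using mass_shift_le[of "{..c}" c t 0] \<open>0 < t\<close> by simp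
  also have "\<dots> \<le> exp (t * c) * G"
    unfolding G_def by (intro mult_left_mono mass_mono) auto
  finally have "exp (t * e) * d < exp (t * c) * G" .
  moreover have "exp (t * e) = exp (t * c) * exp (t * (e - c))"
    by (simp add: right_diff_distrib flip: exp_add)
  ultimately have "exp (t * (e - c)) * d < G"
    by (simp add: mult.assoc)
  moreover have "(1 + t * (e - c)) * d \<le> exp (t * (e - c)) * d"
    using \<open>0 < d\<close> by (intro mult_right_mono exp_ge_add_one_self) auto
  moreover have "(1 + t * (e - c)) * d = d + G"
    using td by (simp add: distrib_right)
  ultimately show False
    using \<open>0 < d\<close> by linarith
qed

lemma gauss_channel_uminus: "gauss_channel M (\<lambda>\<omega>. - X \<omega>)"
  by unfold_locales simp

lemma posterior_uminus:
  "gauss_channel.posterior M (\<lambda>\<omega>. - X \<omega>) y = distr (posterior (- y)) borel uminus"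
proof -
  interpret neg: gauss_channel M "\<lambda>\<omega>. - X \<omega>"
    by (rule gauss_channel_uminus)
  have "std_normal_density (y - - x) = std_normal_density (- y - x)" for x
    using std_normal_density_minus[of "y + x"] by simp
  then show ?thesis
    unfolding neg.posterior_def posterior_def by (simp add: distr_distr comp_def)
qed

lemma AE_ge_if_mass_lower_le:
  assumes le: "\<And>y. mass y {..<c} \<le> mass y {c..}"
  shows "AE \<omega> in M. c \<le> X \<omega>"
proof -
  interpret neg: gauss_channel M "\<lambda>\<omega>. - X \<omega>"
    by (rule gauss_channel_uminus)
  have "uminus -` {- c<..} = {..<c}" "uminus -` {..- c} = {c..}"
    by auto
  then have "neg.mass y {- c<..} \<le> neg.mass y {..- c}" for y
    using le[of "- y"] by (simp add: posterior_uminus measure_distr)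
  then have "AE \<omega> in M. - X \<omega> \<le> - c"
    by (rule neg.AE_le_if_mass_upper_le)
  then show ?thesis
    by simp
qed

lemma gauss_cond_median_eq:
  "gauss_cond_median M X y = gen_inverse (cdf (posterior y)) (mass y UNIV / 2)"
proof -
  have "1 / 2 \<le> gauss_cond_cdf M X y x \<longleftrightarrow> mass y UNIV / 2 \<le> cdf (posterior y) x" for x
    using mass_UNIV_pos[of y]
    by (simp add: gauss_cond_cdf_def cdf_def2 mass_eq_integral field_simps)
  then show ?thesis
    by (simp add: gauss_cond_median_def gen_inverse_def)
qed

lemma mass_tails_at_median:
  fixes y :: real
  defines "c \<equiv> gauss_cond_median M X y"
  shows "mass y {c<..} \<le> mass y {..c}" and "mass y {..<c} \<le> mass y {c..}"
proof -
  interpret P: finite_borel_measure "posterior y"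
    by (rule finite_borel_measure_posterior)
  have half: "0 < mass y UNIV / 2" "mass y UNIV / 2 < measure (posterior y) (space (posterior y))"
    using mass_UNIV_pos[of y] by auto
  show "mass y {c<..} \<le> mass y {..c}"
    using P.gen_inverse_cdf(1)[OF half] mass_atMost_greaterThan[of y c]
    by (simp add: c_def gauss_cond_median_eq cdf_def2)
  show "mass y {..<c} \<le> mass y {c..}"
    using P.gen_inverse_cdf(2)[OF half] mass_lessThan_atLeast[of y c]
    by (simp add: c_def gauss_cond_median_eq)
qed

lemma gauss_cond_median_eqI:
  assumes "\<And>x. c < x \<Longrightarrow> mass y {x<..} \<le> mass y {..x}"
    and "\<And>x. x < c \<Longrightarrow> mass y {..x} < mass y {x<..}"
  shows "gauss_cond_median M X y = c"
  unfolding gauss_cond_median_eq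
proof (rule gen_inverse_eqI)
  show "mass y UNIV / 2 \<le> cdf (posterior y) x" if "c < x" for x
    using assms(1)[OF that] mass_atMost_greaterThan[of y x] by (simp add: cdf_def2)
  show "cdf (posterior y) x < mass y UNIV / 2" if "x < c" for x
    using assms(2)[OF that] mass_atMost_greaterThan[of y x] by (simp add: cdf_def2)
qed

lemma gauss_cond_median_AE_eq:
  assumes "AE \<omega> in M. X \<omega> = c"
  shows "gauss_cond_median M X y = c"
proof (rule gauss_cond_median_eqI)
  show "mass y {x<..} \<le> mass y {..x}" if "c < x" for x
  proof -
    have "mass y {x<..} = 0"
      using assms that by (subst mass_eq_0_iff) (auto elim: eventually_mono)
    then show ?thesis
      by simp
  qed
  show "mass y {..x} < mass y {x<..}" if "x < c" for x
  proof -
    have "mass y {..x} = 0"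
      using assms that by (subst mass_eq_0_iff) (auto elim: eventually_mono)
    then show ?thesis
      using mass_atMost_greaterThan[of y x] mass_UNIV_pos[of y] by simp
  qed
qed

lemma AE_eq_if_gauss_cond_median_const:
  assumes "\<And>y. gauss_cond_median M X y = c"
  shows "AE \<omega> in M. X \<omega> = c"
proof -
  have "AE \<omega> in M. X \<omega> \<le> c"
    using mass_tails_at_median(1) assms by (intro AE_le_if_mass_upper_le) metis
  moreover have "AE \<omega> in M. c \<le> X \<omega>"
    using mass_tails_at_median(2) assms by (intro AE_ge_if_mass_lower_le) metis
  ultimately show ?thesis
    by eventually_elim simp
qed

lemma integral_sgn_eq_mass_diff:
  "(\<integral>\<omega>. sgn (X \<omega> - c) * std_normal_density (y - X \<omega>) \<partial>M) = mass y {c<..} - mass y {..<c}"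
proof -
  have "(\<integral>\<omega>. sgn (X \<omega> - c) * std_normal_density (y - X \<omega>) \<partial>M) =
      (\<integral>\<omega>. indicator {c<..} (X \<omega>) * std_normal_density (y - X \<omega>)
        - indicator {..<c} (X \<omega>) * std_normal_density (y - X \<omega>) \<partial>M)"
    by (intro Bochner_Integration.integral_cong) (auto simp: indicator_def sgn_if)
  also have "\<dots> = mass y {c<..} - mass y {..<c}"
    by (simp add: mass_eq_integral integrable_posterior_integrand)
  finally show ?thesis .
qed

lemma AE_mass_balanced_if_median_linear:
  assumes median: "\<And>y. gauss_cond_median M X y = a * y"
  shows "AE y in lborel. mass y {a * y<..} = mass y {..<a * y}"
proof (cases "a = 0")
  case True
  then have "AE \<omega> in M. X \<omega> = 0"
    using median by (intro AE_eq_if_gauss_cond_median_const) simp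
  then have "mass y {0<..} = 0" "mass y {..<0} = 0" for y
    by (auto simp: mass_eq_0_iff elim!: eventually_mono)
  then show ?thesis
    using True by simp
next
  case False
  interpret P: finite_borel_measure "posterior 0"
    by (rule finite_borel_measure_posterior)
  have balanced: "mass y {a * y<..} = mass y {..<a * y}" if "mass y {a * y} = 0" for y
  proof -
    have "mass y {..a * y} = mass y {..<a * y} + mass y {a * y}"
      using mass_Un[of "{..<a * y}" "{a * y}" y, unfolded ivl_disj_un_singleton] by simp
    moreover have "mass y {a * y..} = mass y {a * y} + mass y {a * y<..}"
      using mass_Un[of "{a * y}" "{a * y<..}" y, unfolded ivl_disj_un_singleton] by simp
    ultimately show ?thesis
      using mass_tails_at_median[of y] median[of y] that by simp
  qed
  have "{y. mass y {a * y} \<noteq> 0} \<subseteq> (\<lambda>c. c / a) ` {c. 0 < mass 0 {c}}"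
  proof
    fix y
    assume "y \<in> {y. mass y {a * y} \<noteq> 0}"
    then have "0 < mass 0 {a * y}"
      using mass_eq_0_iff[of "{a * y}" y] mass_eq_0_iff[of "{a * y}" 0] by (auto simp: zero_less_measure_iff)
    then show "y \<in> (\<lambda>c. c / a) ` {c. 0 < mass 0 {c}}"
      using False by (intro image_eqI[of _ _ "a * y"]) auto
  qed
  moreover have "(\<lambda>c. c / a) ` {c. 0 < mass 0 {c}} \<in> null_sets lborel"
    using P.countable_atoms by (intro countable_imp_null_set_lborel) simp
  ultimately show ?thesis
    using balanced by (intro AE_I') auto
qed

lemma mass_tails_if_AE_balanced:
  assumes balanced: "AE y in lborel. mass y {a * y<..} = mass y {..<a * y}"
  shows "x < a * y \<Longrightarrow> mass y {..x} \<le> mass y {x<..}"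
    and "a * y < x \<Longrightarrow> mass y {x<..} \<le> mass y {..x}"
proof -
  have cont: "continuous_on UNIV (\<lambda>y. mass y {..x})" "continuous_on UNIV (\<lambda>y. mass y {x<..})"
    by (simp_all add: continuous_on_mass)
  show "mass y {..x} \<le> mass y {x<..}" if "x < a * y"
  proof (rule continuous_le_if_AE_lborel_le[OF cont])
    show "AE y in lborel. y \<in> {y. x < a * y} \<longrightarrow> mass y {..x} \<le> mass y {x<..}"
      using balanced
    proof eventually_elim
      case (elim y)
      show ?case
      proof
        assume "y \<in> {y. x < a * y}"
        then have "mass y {..x} \<le> mass y {..<a * y}" and "mass y {a * y<..} \<le> mass y {x<..}"
          by (auto intro!: mass_mono)
        then show "mass y {..x} \<le> mass y {x<..}"
          using elim by simp
      qed
    qed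
  qed (use that in \<open>auto intro: open_Collect_less continuous_intros\<close>)
  show "mass y {x<..} \<le> mass y {..x}" if "a * y < x"
  proof (rule continuous_le_if_AE_lborel_le[OF cont(2,1)])
    show "AE y in lborel. y \<in> {y. a * y < x} \<longrightarrow> mass y {x<..} \<le> mass y {..x}"
      using balanced
    proof eventually_elim
      case (elim y)
      show ?case
      proof
        assume "y \<in> {y. a * y < x}"
        then have "mass y {x<..} \<le> mass y {a * y<..}" and "mass y {..<a * y} \<le> mass y {..x}"
          by (auto intro!: mass_mono)
        then show "mass y {x<..} \<le> mass y {..x}"
          using elim by simp
      qed
    qed
  qed (use that in \<open>auto intro: open_Collect_less continuous_intros\<close>)
qed

lemma AE_gap_if_balanced_below_median:
  assumes balanced: "AE y in lborel. mass y {a * y<..} = mass y {..<a * y}"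
    and "x < a * y0" and balanced0: "mass y0 {..x} = mass y0 {x<..}"
  shows "AE \<omega> in M. X \<omega> \<notin> {x<..<a * y0}"
proof -
  interpret P: finite_borel_measure "posterior y0"
    by (rule finite_borel_measure_posterior)
  have "eventually (\<lambda>x'. cdf (posterior y0) x' \<le> mass y0 UNIV / 2) (at_left (a * y0))"
  proof (rule eventually_mono[OF eventually_at_left_real[OF \<open>x < a * y0\<close>]])
    fix x' assume "x' \<in> {x<..<a * y0}"
    then show "cdf (posterior y0) x' \<le> mass y0 UNIV / 2"
      using mass_tails_if_AE_balanced(1)[OF balanced, of x' y0] mass_atMost_greaterThan[of y0 x']
      by (simp add: cdf_def2)
  qed
  then have "mass y0 {..<a * y0} \<le> mass y0 UNIV / 2"
    by (rule tendsto_upperbound[OF P.cdf_at_left]) simp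
  moreover have "mass y0 {..<a * y0} = mass y0 {..x} + mass y0 {x<..<a * y0}"
  proof -
    have split: "{..<a * y0} = {..x} \<union> {x<..<a * y0}"
      using \<open>x < a * y0\<close> by auto
    show ?thesis
      unfolding split by (rule mass_Un) auto
  qed
  moreover have "mass y0 {..x} = mass y0 UNIV / 2"
    using balanced0 mass_atMost_greaterThan[of y0 x] by linarith
  ultimately have "mass y0 {x<..<a * y0} = 0"
    using measure_nonneg[of "posterior y0" "{x<..<a * y0}"] by linarith
  then show ?thesis
    by (simp add: mass_eq_0_iff)
qed

text \<open>If the tails balanced at \<open>x\<close> for \<open>y\<^sub>0\<close>, the posterior would charge nothing in
  \<open>(x, ay\<^sub>0)\<close>; the tails would then also balance at \<open>x\<close> for any good \<open>y\<^sub>1\<close> with \<open>ay\<^sub>1\<close> in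
  that gap, contradicting \<open>mass_balanced_unique\<close>.\<close>

lemma mass_lower_less_upper_if_AE_balanced:
  assumes "a \<noteq> 0" and balanced: "AE y in lborel. mass y {a * y<..} = mass y {..<a * y}"
    and "x < a * y0"
  shows "mass y0 {..x} < mass y0 {x<..}"
proof (rule ccontr)
  define N where "N = {x<..<a * y0}"
  assume "\<not> mass y0 {..x} < mass y0 {x<..}"
  then have balanced0: "mass y0 {..x} = mass y0 {x<..}"
    using mass_tails_if_AE_balanced(1)[OF balanced assms(3)] by linarith
  have null: "N \<in> null_sets (posterior y)" for y
    using AE_gap_if_balanced_below_median[OF balanced assms(3) balanced0]
    by (simp add: N_def null_sets_posterior_iff)
  have "\<exists>y\<in>{y. x < a * y \<and> a * y < a * y0}. mass y {a * y<..} = mass y {..<a * y}"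
  proof (rule AE_lborel_ex_in_open[OF balanced])
    show "open {y. x < a * y \<and> a * y < a * y0}"
      by (intro open_Collect_conj open_Collect_less continuous_intros)
    have "(x + a * y0) / (2 * a) \<in> {y. x < a * y \<and> a * y < a * y0}"
      using \<open>a \<noteq> 0\<close> \<open>x < a * y0\<close> by simp
    then show "{y. x < a * y \<and> a * y < a * y0} \<noteq> {}"
      by blast
  qed
  then obtain y1 where y1: "x < a * y1" "a * y1 < a * y0" "mass y1 {a * y1<..} = mass y1 {..<a * y1}"
    by blast
  have "mass y1 {..x} = mass y1 ({..<a * y1} - N)"
    using y1 by (intro arg_cong[where f="mass y1"]) (auto simp: N_def)
  also have "\<dots> = mass y1 {..<a * y1}"
    using null by (intro measure_Diff_null_set) auto
  also have "\<dots> = mass y1 ({a * y1<..} - N)"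
    using null y1(3) by (simp add: measure_Diff_null_set)
  also have "\<dots> = mass y1 ({x<..} - N)"
    using y1 by (intro arg_cong[where f="mass y1"]) (auto simp: N_def)
  also have "\<dots> = mass y1 {x<..}"
    using null by (intro measure_Diff_null_set) auto
  finally have "y1 = y0"
    using balanced0 by (rule mass_balanced_unique)
  then show False
    using y1(2) by simp
qed

lemma AE_eq_0_if_AE_balanced_at_0:
  assumes balanced: "AE y in lborel. mass y {0<..} = mass y {..<0}"
  shows "AE \<omega> in M. X \<omega> = 0"
proof -
  obtain y1 where y1: "y1 \<in> {0<..<1}" "mass y1 {0<..} = mass y1 {..<0}"
    using AE_lborel_ex_in_open[OF balanced, of "{0<..<1}"] by auto
  obtain y2 where y2: "y2 \<in> {1<..<2}" "mass y2 {0<..} = mass y2 {..<0}"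
    using AE_lborel_ex_in_open[OF balanced, of "{1<..<2}"] by auto
  have "\<not> 0 < mass y1 {0<..}"
  proof
    assume "0 < mass y1 {0<..}"
    then have "mass y2 {..<0} < mass y2 {0<..}"
      using y1 y2 by (intro mass_lower_less_upper[where c=0 and y=y1]) auto
    then show False
      using y2 by simp
  qed
  then have "mass y1 {0<..} = 0" "mass y1 {..<0} = 0"
    using y1(2) by (auto simp: zero_less_measure_iff)
  then have "AE \<omega> in M. X \<omega> \<notin> {0<..}" "AE \<omega> in M. X \<omega> \<notin> {..<0}"
    by (simp_all add: mass_eq_0_iff)
  then show ?thesis
    by eventually_elim auto
qed

lemma gauss_cond_median_linear_if_AE_balanced:
  assumes balanced: "AE y in lborel. mass y {a * y<..} = mass y {..<a * y}"
  shows "gauss_cond_median M X y = a * y"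
proof (cases "a = 0")
  case True
  have "AE \<omega> in M. X \<omega> = 0"
    using balanced True by (intro AE_eq_0_if_AE_balanced_at_0) simp
  then show ?thesis
    using True by (simp add: gauss_cond_median_AE_eq)
next
  case False
  show ?thesis
  proof (rule gauss_cond_median_eqI)
    show "mass y {x<..} \<le> mass y {..x}" if "a * y < x" for x
      using that by (rule mass_tails_if_AE_balanced(2)[OF balanced])
    show "mass y {..x} < mass y {x<..}" if "x < a * y" for x
      using that by (rule mass_lower_less_upper_if_AE_balanced[OF False balanced])
  qed
qed

end

theorem proposition4:
  fixes M :: "'a measure" and X Z Y :: "'a \<Rightarrow> real" and a :: real
  assumes "prob_space M"
    and "X \<in> borel_measurable M"
    and "Z \<in> borel_measurable M"
    and "prob_space.indep_var M borel X borel Z"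
    and "distributed M lborel Z std_normal_density"
    and "\<And>\<omega>. Y \<omega> = X \<omega> + Z \<omega>"
  shows "(\<forall>y. gauss_cond_median M X y = a * y) \<longleftrightarrow>
         (AE y in lborel. (\<integral>\<omega>. sgn (X \<omega> - a * y) * std_normal_density (y - X \<omega>) \<partial>M) = 0)"
proof -
  interpret gauss_channel M X
    using assms(1,2) by (simp add: gauss_channel_def gauss_channel_axioms_def)
  have sgn_balanced: "(\<integral>\<omega>. sgn (X \<omega> - a * y) * std_normal_density (y - X \<omega>) \<partial>M) = 0 \<longleftrightarrow>
      mass y {a * y<..} = mass y {..<a * y}" for y
    by (simp add: integral_sgn_eq_mass_diff)
  show ?thesis
    unfolding sgn_balanced
    using AE_mass_balanced_if_median_linear gauss_cond_median_linear_if_AE_balanced by blast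
qed

end
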